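(* For all types $A$, $B$, $C$ and every type variable $X$: if $A \simeq B$, then $A[C/X] \simeq B[C/X]$.
   Context: Types and rows share one grammar: $A,B,C,\rho ::= X \mid \alpha \mid \star \mid \iota \mid A\to B \mid \forall X{:}K.\,A \mid [\rho] \mid \langle\rho\rangle \mid \cdot \mid \ell{:}A;\rho$, where $X$ ranges over type variables (bound by $\forall$), $\alpha$ over type names, $\star$ is the dynamic type (also serving as the dynamic row), $\iota$ over base types, $[\rho]$ and $\langle\rho\rangle$ are record and variant types, $\cdot$ is the empty row, $\ell$ ranges over labels, and $K\in\{\mathsf T,\mathsf R\}$ is a kind. Types are identified up to renaming of bound variables; $\mathit{ftv}(A)$ is the set of free type variables, and $A[C/X]$ denotes capture-avoiding substitution of $C$ for $X$ in $A$. Row matching $\rho \triangleright_\ell A,\rho'$ is defined by: $(\ell{:}A;\rho)\triangleright_\ell A,\rho$; if $\ell'\neq\ell$ and $\rho\triangleright_\ell A,\rho'$ then $(\ell'{:}B;\rho)\triangleright_\ell A,(\ell'{:}B;\rho')$; and $\star\triangleright_\ell \star,\star$. $\mathbf{QPoly}(A)$ holds iff $A$ is not of the form $\forall X{:}K.\,B$ and $\star$ occurs in $A$. Consistency $\simeq$ is defined inductively: $A\simeq A$; $\star\simeq A$; $A\simeq\star$; $A_1\to A_2\simeq B_1\to B_2$ if $A_1\simeq B_1$ and $A_2\simeq B_2$; $\forall X{:}K.A\simeq\forall X{:}K.B$ if $A\simeq B$; $\forall X{:}K.A\simeq B$ if $\mathbf{QPoly}(B)$, $X\notin\mathit{ftv}(B)$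 and $A\simeq B$; $A\simeq\forall X{:}K.B$ if $\mathbf{QPoly}(A)$, $X\notin\mathit{ftv}(A)$ and $A\simeq B$; $[\rho_1]\simeq[\rho_2]$ and $\langle\rho_1\rangle\simeq\langle\rho_2\rangle$ if $\rho_1\simeq\rho_2$; $\ell{:}A;\rho_1\simeq B$ if $B\triangleright_\ell B',\rho_2$, $A\simeq B'$ and $\rho_1\simeq\rho_2$; $A\simeq \ell{:}B;\rho_2$ if $A\triangleright_\ell A',\rho_1$, $A'\simeq B$ and $\rho_1\simeq\rho_2$. *)

theory Defs
  imports Main
begin

datatype kind = KT | KR

text \<open>Bound type variables X use de Bruijn indices
  (so types are identified up to renaming of bound variables); free type
  variables are indices not bound by an enclosing Forall.
  'n: type names alpha, 'b: base types iota, 'l: labels.\<close>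
datatype ('n, 'b, 'l) ty =
    TVar nat
  | TName 'n
  | Dyn
  | Base 'b
  | Arrow "('n, 'b, 'l) ty" "('n, 'b, 'l) ty"
  | Forall kind "('n, 'b, 'l) ty"
  | Record "('n, 'b, 'l) ty"
  | Variant "('n, 'b, 'l) ty"
  | REmpty
  | RExt 'l "('n, 'b, 'l) ty" "('n, 'b, 'l) ty"

fun lift :: "nat \<Rightarrow> ('n, 'b, 'l) ty \<Rightarrow> ('n, 'b, 'l) ty" where
  "lift k (TVar i) = (if i < k then TVar i else TVar (Suc i))"
| "lift k (TName a) = TName a"
| "lift k Dyn = Dyn"
| "lift k (Base b) = Base b"
| "lift k (Arrow A B) = Arrow (lift k A) (lift k B)"
| "lift k (Forall K A) = Forall K (lift (Suc k) A)"
| "lift k (Record r) = Record (lift k r)"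
| "lift k (Variant r) = Variant (lift k r)"
| "lift k REmpty = REmpty"
| "lift k (RExt l A r) = RExt l (lift k A) (lift k r)"

text \<open>Capture-avoiding substitution A[C/X] of C for the free variable X (index j).
  Other free variables keep their identity (no renumbering), as for named variables.\<close>
fun subst :: "nat \<Rightarrow> ('n, 'b, 'l) ty \<Rightarrow> ('n, 'b, 'l) ty \<Rightarrow> ('n, 'b, 'l) ty" where
  "subst j C (TVar i) = (if i = j then C else TVar i)"
| "subst j C (TName a) = TName a"
| "subst j C Dyn = Dyn"
| "subst j C (Base b) = Base b"
| "subst j C (Arrow A B) = Arrow (subst j C A) (subst j C B)"
| "subst j C (Forall K A) = Forall K (subst (Suc j) (lift 0 C) A)"
| "subst j C (Record r) = Record (subst j C r)"
| "subst j C (Variant r) = Variant (subst j C r)"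
| "subst j C REmpty = REmpty"
| "subst j C (RExt l A r) = RExt l (subst j C A) (subst j C r)"

fun has_dyn :: "('n, 'b, 'l) ty \<Rightarrow> bool" where
  "has_dyn (TVar i) = False"
| "has_dyn (TName a) = False"
| "has_dyn Dyn = True"
| "has_dyn (Base b) = False"
| "has_dyn (Arrow A B) = (has_dyn A \<or> has_dyn B)"
| "has_dyn (Forall K A) = has_dyn A"
| "has_dyn (Record r) = has_dyn r"
| "has_dyn (Variant r) = has_dyn r"
| "has_dyn REmpty = False"
| "has_dyn (RExt l A r) = (has_dyn A \<or> has_dyn r)"

definition QPoly :: "('n, 'b, 'l) ty \<Rightarrow> bool" where
  "QPoly A \<longleftrightarrow> (\<forall>K B. A \<noteq> Forall K B) \<and> has_dyn A"

inductive row_match :: "('n, 'b, 'l) ty \<Rightarrow> 'l \<Rightarrow> ('n, 'b, 'l) ty \<Rightarrow> ('n, 'b, 'l) ty \<Rightarrow> bool" where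
  rm_head: "row_match (RExt l A r) l A r"
| rm_skip: "l' \<noteq> l \<Longrightarrow> row_match r l A r' \<Longrightarrow> row_match (RExt l' B r) l A (RExt l' B r')"
| rm_dyn: "row_match Dyn l Dyn Dyn"

text \<open>Consistency. In de Bruijn form, "forall X.A ~ B with X not free in B and A ~ B"
  becomes "A ~ lift 0 B" (B viewed under the binder).\<close>
inductive consistent :: "('n, 'b, 'l) ty \<Rightarrow> ('n, 'b, 'l) ty \<Rightarrow> bool" where
  c_refl: "consistent A A"
| c_dynL: "consistent Dyn A"
| c_dynR: "consistent A Dyn"
| c_arrow: "consistent A1 B1 \<Longrightarrow> consistent A2 B2 \<Longrightarrow> consistent (Arrow A1 A2) (Arrow B1 B2)"
| c_forall: "consistent A B \<Longrightarrow> consistent (Forall K A) (Forall K B)"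
| c_forallL: "QPoly B \<Longrightarrow> consistent A (lift 0 B) \<Longrightarrow> consistent (Forall K A) B"
| c_forallR: "QPoly A \<Longrightarrow> consistent (lift 0 A) B \<Longrightarrow> consistent A (Forall K B)"
| c_record: "consistent r1 r2 \<Longrightarrow> consistent (Record r1) (Record r2)"
| c_variant: "consistent r1 r2 \<Longrightarrow> consistent (Variant r1) (Variant r2)"
| c_rowL: "row_match B l B' r2 \<Longrightarrow> consistent A B' \<Longrightarrow> consistent r1 r2
           \<Longrightarrow> consistent (RExt l A r1) B"
| c_rowR: "row_match A l A' r1 \<Longrightarrow> consistent A' B \<Longrightarrow> consistent r1 r2
           \<Longrightarrow> consistent A (RExt l B r2)"

end

theory Submission
  imports Defs
begin

(* Every rule of consistency is stable under substitution: QPoly and row matching are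
   preserved because substitution never removes an occurrence of the dynamic type and
   never changes labels or the outermost constructor of a non-variable type, and the
   side condition of the quantifier rules, which weakens B under the binder to lift 0 B,
   is preserved because substitution commutes with lifting. *)

lemma lift_lift: "i \<le> k \<Longrightarrow> lift i (lift k C) = lift (Suc k) (lift i C)"
  by (induction C arbitrary: i k) auto

lemma subst_lift_commute:
  "k \<le> j \<Longrightarrow> subst (Suc j) (lift k C) (lift k B) = lift k (subst j C B)"
  by (induction B arbitrary: k j C) (auto simp: lift_lift)

lemma has_dyn_subst: "has_dyn B \<Longrightarrow> has_dyn (subst j C B)"
  by (induction B arbitrary: j C) auto

lemma QPoly_subst: "QPoly B \<Longrightarrow> QPoly (subst j C B)"
  unfolding QPoly_def by (cases B) (auto simp: has_dyn_subst)

lemma row_match_subst: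
  "row_match B l B' r \<Longrightarrow> row_match (subst j C B) l (subst j C B') (subst j C r)"
  by (induction rule: row_match.induct) (auto intro: row_match.intros)

theorem mainTheorem13:
  fixes A B C :: "('n, 'b, 'l) ty" and X :: nat
  assumes "consistent A B"
  shows "consistent (subst X C A) (subst X C B)"
  using assms
proof (induction arbitrary: X C rule: consistent.induct)
  case (c_forallL B A K)
  have "consistent (subst (Suc X) (lift 0 C) A) (lift 0 (subst X C B))"
    using c_forallL.IH[of "Suc X" "lift 0 C"] by (simp add: subst_lift_commute)
  with QPoly_subst[OF c_forallL.hyps(1)] show ?case
    by (simp add: consistent.c_forallL)
next
  case (c_forallR A B K)
  have "consistent (lift 0 (subst X C A)) (subst (Suc X) (lift 0 C) B)"
    using c_forallR.IH[of "Suc X" "lift 0 C"] by (simp add: subst_lift_commute)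
  with QPoly_subst[OF c_forallR.hyps(1)] show ?case
    by (simp add: consistent.c_forallR)
qed (auto intro: consistent.intros row_match_subst)

end
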